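(* For all $z\in\mathbb S^1$, $\mathrm n_-(b_z)\le2\dim(M)-\mathrm n_0(\gamma)$; if moreover $z$ is not an eigenvalue of $\mathfrak P$, then $\mathrm n_-(b_z)\le\dim(M)-\mathrm n_0(\gamma)$. Consequently, for every integer $N\ge1$, with $\omega=e^{2\pi i/N}$, $$0\le\sum_{k=0}^{N-1}\mathrm n_-(b_{\omega^k})\le N\big[\dim(M)-\mathrm n_0(\gamma)\big]+4\dim(M)^2-2\,\mathrm n_0(\gamma)\dim(M).$$
   Context: Let $(M,g)$ be a semi-Riemannian manifold of dimension $n$ and $\gamma:[0,1]\to M$ an orientation preserving closed geodesic, extended $1$-periodically. Fix a smooth $1$-periodic family of isomorphisms $T_t:\mathbb R^n\to T_{\gamma(t)}M$ with $g(T_te_i,T_te_j)=\epsilon_i\delta_{ij}$, $\epsilon_i\in\{\pm1\}$. Put $G(u,v)=\sum_j\epsilon_ju_j\bar v_j$ on $\mathbb C^n$. Let $\overline R_t=T_t^{-1}\circ R(\dot\gamma(t),T_t\,\cdot\,)\dot\gamma(t)$ (curvature $R(X,Y)=[\nabla_X,\nabla_Y]-\nabla_{[X,Y]}$) and $\Gamma_t$ defined by $T_t^{-1}\tfrac{D}{dt}\big(T_t\overline V(t)\big)=\overline V'(t)+\Gamma_t\overline V(t)$, extended $\mathbb C$-linearly. The Jacobi equation (J) is $V''+2\Gamma_rV'+(\Gamma_r'+\Gamma_r^2-\overline R_r)V=0$. The linearized Poincaré map $\mathfrak P:\mathbb C^{2n}\to\mathbb C^{2n}$ is $\mathfrak P(v,v')=\big(V(1),V'(1)+\Gamma_0V(1)\big)$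 where $V$ solves (J) with $V(0)=v$, $V'(0)=v'-\Gamma_0v$. $\mathrm n_0(\gamma)$ is the dimension of the space of solutions of (J) with $V(0)=V(1)=0$. $\mathbb J^{(2)}_\gamma(z)=\{V\ \text{solution of (J)}:V(1)=zV(0)\}$ and $b_z$ is the Hermitian form on $\mathbb J^{(2)}_\gamma(z)$ given by $b_z(V,W)=G\big(\bar zV'(1)-V'(0),W(0)\big)$. $\mathrm n_-(b)$ is the index (maximal dimension of a negative definite subspace) of a Hermitian form $b$. *)

theory Defs
  imports "HOL-Analysis.Analysis" "HOL-Library.Function_Algebras"
begin

text \<open>Everything is expressed in a fixed 1-periodic orthonormal frame T_t along gamma;
  the index type 'n has CARD('n) = dim M elements.\<close>

definition smooth_fun :: "(real \<Rightarrow> 'a::real_normed_vector) \<Rightarrow> bool" where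
  "smooth_fun f \<longleftrightarrow> (\<exists>D. D 0 = f \<and> (\<forall>k t. (D k has_vector_derivative D (Suc k) t) (at t)))"

definition cmat :: "real^'n^'m \<Rightarrow> complex^'n^'m" where
  "cmat A = (\<chi> i j. complex_of_real (A $ i $ j))"

definition Gform :: "('n::finite \<Rightarrow> real) \<Rightarrow> complex^'n \<Rightarrow> complex^'n \<Rightarrow> complex" where
  "Gform eps u v = (\<Sum>j\<in>UNIV. complex_of_real (eps j) * u $ j * cnj (v $ j))"

abbreviation vd :: "(real \<Rightarrow> 'a::real_normed_vector) \<Rightarrow> real \<Rightarrow> 'a" where
  "vd f t \<equiv> vector_derivative f (at t)"

definition jacobi_sol :: "(real \<Rightarrow> real^'n^'n) \<Rightarrow> (real \<Rightarrow> real^'n^'n)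
    \<Rightarrow> (real \<Rightarrow> complex^'n) \<Rightarrow> bool" where
  "jacobi_sol Gam R V \<longleftrightarrow> (\<exists>V1 V2. \<forall>t.
      (V has_vector_derivative V1 t) (at t) \<and> (V1 has_vector_derivative V2 t) (at t) \<and>
      V2 t + (2::complex) *s (cmat (Gam t) *v V1 t)
        + cmat (vd Gam t + Gam t ** Gam t - R t) *v V t = 0)"

definition fscale :: "complex \<Rightarrow> (real \<Rightarrow> complex^'n) \<Rightarrow> (real \<Rightarrow> complex^'n)" where
  "fscale c f = (\<lambda>t. c *s f t)"

definition cdim :: "(real \<Rightarrow> complex^'n) set \<Rightarrow> nat" where
  "cdim S = vector_space.dim fscale S"

definition csubspace :: "(real \<Rightarrow> complex^'n) set \<Rightarrow> bool" where
  "csubspace S = module.subspace fscale S"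

definition n0 :: "(real \<Rightarrow> real^'n^'n) \<Rightarrow> (real \<Rightarrow> real^'n^'n) \<Rightarrow> nat" where
  "n0 Gam R = cdim {V. jacobi_sol Gam R V \<and> V 0 = 0 \<and> V 1 = 0}"

definition J2 :: "(real \<Rightarrow> real^'n^'n) \<Rightarrow> (real \<Rightarrow> real^'n^'n) \<Rightarrow> complex
    \<Rightarrow> (real \<Rightarrow> complex^'n) set" where
  "J2 Gam R z = {V. jacobi_sol Gam R V \<and> V 1 = z *s V 0}"

definition bform :: "('n::finite \<Rightarrow> real) \<Rightarrow> complex \<Rightarrow> (real \<Rightarrow> complex^'n)
    \<Rightarrow> (real \<Rightarrow> complex^'n) \<Rightarrow> complex" where
  "bform eps z V W = Gform eps (cnj z *s vd V 1 - vd V 0) (W 0)"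

definition neg_index :: "((real \<Rightarrow> complex^'n) \<Rightarrow> (real \<Rightarrow> complex^'n) \<Rightarrow> complex)
    \<Rightarrow> (real \<Rightarrow> complex^'n) set \<Rightarrow> nat" where
  "neg_index b S = Sup {d. \<exists>W. csubspace W \<and> W \<subseteq> S \<and> cdim W = d \<and>
       (\<forall>V\<in>W. V \<noteq> 0 \<longrightarrow> Re (b V V) < 0)}"

definition n_minus :: "('n::finite \<Rightarrow> real) \<Rightarrow> (real \<Rightarrow> real^'n^'n) \<Rightarrow> (real \<Rightarrow> real^'n^'n)
    \<Rightarrow> complex \<Rightarrow> nat" where
  "n_minus eps Gam R z = neg_index (bform eps z) (J2 Gam R z)"

definition poincare :: "(real \<Rightarrow> real^'n^'n) \<Rightarrow> (real \<Rightarrow> real^'n^'n)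
    \<Rightarrow> (complex^'n) \<times> (complex^'n) \<Rightarrow> (complex^'n) \<times> (complex^'n)" where
  "poincare Gam R p = (let V = (THE V. jacobi_sol Gam R V \<and> V 0 = fst p \<and>
        vd V 0 = snd p - cmat (Gam 0) *v fst p)
     in (V 1, vd V 1 + cmat (Gam 0) *v V 1))"

definition poincare_eigenvalue :: "(real \<Rightarrow> real^'n^'n) \<Rightarrow> (real \<Rightarrow> real^'n^'n) \<Rightarrow> complex \<Rightarrow> bool" where
  "poincare_eigenvalue Gam R z \<longleftrightarrow>
     (\<exists>v w. (v, w) \<noteq> (0, 0) \<and> poincare Gam R (v, w) = (z *s v, z *s w))"

end

theory Submission
  imports Defs
begin

(* All three claims are dimension counts in the solution space of the Jacobi
   equation (J).  Writing (J) as a first-order linear system, existence and uniqueness of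
   solutions with prescribed data (V(0), V'(0)) show that the solutions form a complex vector
   space of dimension at most 2n (n = dim M), via the injective map V \<mapsto> (V(0), V'(0)).
   If W \<subseteq> J2(z) is b_z-negative definite, then W meets the Dirichlet space
   N0 = {V(0) = V(1) = 0} only in 0, because b_z(V,V) = 0 whenever V(0) = 0.  Hence
   dim W + n0 \<le> 2n.  If moreover |z| = 1 and z is not a Poincare eigenvalue, the map
   V \<mapsto> conj z V'(1) - V'(0) is injective on J2(z), which sharpens the count to n.
   Finally, solutions with V(t+1) = z V(t) for distinct z are linearly independent, so at most
   2n of the N-th roots of unity are Poincare eigenvalues; summing the two bounds gives the
   estimate for the sum over roots of unity. *)


section \<open>Linear ODEs on a Euclidean space\<close>

lemma integral_monomial:
  fixes c :: real assumes "0 \<le> t"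
  shows "integral {0..t} (\<lambda>s. c * s ^ k) = c * t ^ Suc k / real (Suc k)"
proof -
  have "((\<lambda>s. c * s ^ Suc k / real (Suc k)) has_real_derivative c * s ^ k) (at s within {0..t})" for s
    by (rule derivative_eq_intros refl | simp del: of_nat_Suc)+
  then have "((\<lambda>s. c * s ^ k) has_integral (c * t ^ Suc k / real (Suc k) - c * 0 ^ Suc k / real (Suc k))) {0..t}"
    by (intro fundamental_theorem_of_calculus[OF assms]) (simp add: has_real_derivative_iff_has_vector_derivative)
  then have "((\<lambda>s. c * s ^ k) has_integral (c * t ^ Suc k / real (Suc k))) {0..t}" by simp
  then show ?thesis by (rule integral_unique)
qed

lemma uniform_limit_apply_linear_family:
  fixes A :: "real \<Rightarrow> 'a::real_normed_vector \<Rightarrow> 'b::real_normed_vector"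
  assumes lin: "\<And>t. linear (A t)" and K: "K \<ge> 0" "\<forall>s\<in>S. \<forall>x. norm (A s x) \<le> K * norm x"
    and lim: "uniform_limit S f g F"
  shows "uniform_limit S (\<lambda>n s. A s (f n s)) (\<lambda>s. A s (g s)) F"
proof (rule uniform_limitI)
  fix e :: real assume e: "e > 0"
  have "\<forall>\<^sub>F n in F. \<forall>s\<in>S. dist (f n s) (g s) < e / (K + 1)"
    using uniform_limitD[OF lim, of "e / (K + 1)"] e K by auto
  then show "\<forall>\<^sub>F n in F. \<forall>s\<in>S. dist (A s (f n s)) (A s (g s)) < e"
  proof (rule eventually_mono, intro ballI)
    fix n s assume close: "\<forall>s\<in>S. dist (f n s) (g s) < e / (K + 1)" and s: "s \<in> S"
    have "dist (A s (f n s)) (A s (g s)) = norm (A s (f n s - g s))"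
      by (simp add: dist_norm linear_diff[OF lin])
    also have "\<dots> \<le> K * norm (f n s - g s)" using K s by auto
    also have "\<dots> \<le> K * (e / (K + 1))"
      using close s K by (intro mult_left_mono) (auto simp: dist_norm less_imp_le)
    also have "\<dots> < e" using e K by (simp add: field_simps)
    finally show "dist (A s (f n s)) (A s (g s)) < e" .
  qed
qed

text \<open>The integral equation \<open>x t = x0 + \<integral>\<^sub>0\<^sup>t A s (x s) ds\<close> is solved by Picard iteration.\<close>
locale forward_linear_ode =
  fixes A :: "real \<Rightarrow> 'a::euclidean_space \<Rightarrow> 'a"
  assumes linear_A: "\<And>t. linear (A t)"
    and bounded_A: "\<And>T. \<exists>K\<ge>0. \<forall>t\<in>{0..T}. \<forall>x. norm (A t x) \<le> K * norm x"
    and continuous_A: "\<And>S x. continuous_on S x \<Longrightarrow> continuous_on S (\<lambda>t. A t (x t))"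
begin

definition picard :: "'a \<Rightarrow> nat \<Rightarrow> real \<Rightarrow> 'a" where
  "picard x0 = rec_nat (\<lambda>t. x0) (\<lambda>k p t. x0 + integral {0..t} (\<lambda>s. A s (p s)))"

lemma picard_0 [simp]: "picard x0 0 = (\<lambda>t. x0)"
  by (simp add: picard_def)

text \<open>Not a simp rule: it would also unfold the iterate inside the integrand.\<close>
lemma picard_Suc: "picard x0 (Suc k) t = x0 + integral {0..t} (\<lambda>s. A s (picard x0 k s))"
  by (simp add: picard_def)

text \<open>Each iterate is continuous, so the next integral exists.\<close>
lemma picard_continuous: "continuous_on {0..T} (picard x0 k)"
proof (induction k)
  case (Suc k)
  have "(\<lambda>s. A s (picard x0 k s)) integrable_on {0..T}"
    by (rule integrable_continuous_real[OF continuous_A[OF Suc]])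
  then have "continuous_on {0..T} (\<lambda>t. integral {0..t} (\<lambda>s. A s (picard x0 k s)))"
    by (rule indefinite_integral_continuous_1)
  then show ?case by (auto simp: picard_Suc intro: continuous_intros)
qed simp

lemma picard_integrable: "(\<lambda>s. A s (picard x0 k s)) integrable_on {0..t}"
  by (rule integrable_continuous_real[OF continuous_A[OF picard_continuous]])

lemma picard_increment:
  "picard x0 (Suc (Suc k)) t - picard x0 (Suc k) t
     = integral {0..t} (\<lambda>s. A s (picard x0 (Suc k) s - picard x0 k s))"
  unfolding picard_Suc[of x0 "Suc k" t] picard_Suc[of x0 k t] linear_diff[OF linear_A]
  by (simp add: integral_diff[OF picard_integrable picard_integrable])

lemma picard_increment_bound:
  assumes K: "K \<ge> 0" "\<forall>t\<in>{0..T}. \<forall>x. norm (A t x) \<le> K * norm x" and t: "t \<in> {0..T}"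
  shows "norm (picard x0 (Suc k) t - picard x0 k t) \<le> norm x0 * (K * t) ^ Suc k / fact (Suc k)"
  using t
proof (induction k arbitrary: t)
  case 0
  have "norm (picard x0 (Suc 0) t - picard x0 0 t) = norm (integral {0..t} (\<lambda>s. A s x0))"
    by (simp add: picard_Suc)
  also have "\<dots> \<le> integral {0..t} (\<lambda>s. K * norm x0)"
    using K 0 by (intro integral_norm_bound_integral integrable_continuous_real continuous_intros
        continuous_A[OF continuous_on_const]) auto
  also have "\<dots> = norm x0 * (K * t) ^ Suc 0 / fact (Suc 0)" using 0 by (simp add: algebra_simps)
  finally show ?case .
next
  case (Suc k)
  let ?c = "K * norm x0 * K ^ Suc k / fact (Suc k)"
  have intd: "(\<lambda>s. A s (picard x0 (Suc k) s - picard x0 k s)) integrable_on {0..t}"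
    unfolding linear_diff[OF linear_A] by (intro integrable_diff picard_integrable)
  have "norm (picard x0 (Suc (Suc k)) t - picard x0 (Suc k) t) \<le> integral {0..t} (\<lambda>s. ?c * s ^ Suc k)"
    unfolding picard_increment
  proof (rule integral_norm_bound_integral[OF intd])
    show "(\<lambda>s. ?c * s ^ Suc k) integrable_on {0..t}"
      by (intro integrable_continuous_real continuous_intros)
    fix s assume "s \<in> {0..t}"
    then have s: "s \<in> {0..T}" using Suc.prems by auto
    have "norm (A s (picard x0 (Suc k) s - picard x0 k s)) \<le> K * norm (picard x0 (Suc k) s - picard x0 k s)"
      using K s by auto
    also have "\<dots> \<le> K * (norm x0 * (K * s) ^ Suc k / fact (Suc k))"
      using Suc.IH[OF s] K by (intro mult_left_mono) auto
    also have "\<dots> = ?c * s ^ Suc k" by (simp add: power_mult_distrib)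
    finally show "norm (A s (picard x0 (Suc k) s - picard x0 k s)) \<le> ?c * s ^ Suc k" .
  qed
  also have "\<dots> = ?c * t ^ Suc (Suc k) / real (Suc (Suc k))"
    by (rule integral_monomial) (use Suc.prems in auto)
  also have "\<dots> = norm x0 * (K * t) ^ Suc (Suc k) / fact (Suc (Suc k))"
    by (simp add: power_mult_distrib field_simps del: fact_Suc) (simp add: algebra_simps)
  finally show ?case .
qed

definition picard_limit :: "'a \<Rightarrow> real \<Rightarrow> 'a" where
  "picard_limit x0 t = x0 + (\<Sum>i. picard x0 (Suc i) t - picard x0 i t)"

text \<open>By the Weierstrass M-test with the exponential series, the iterates converge
  uniformly on every interval \<open>[0,T]\<close>.\<close>
lemma picard_uniform_limit: "uniform_limit {0..T} (picard x0) (picard_limit x0) sequentially"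
proof -
  obtain K where K: "K \<ge> 0" "\<forall>t\<in>{0..T}. \<forall>x. norm (A t x) \<le> K * norm x" using bounded_A by blast
  define M where "M k = norm x0 * ((K * T) ^ Suc k / fact (Suc k))" for k
  have M: "norm (picard x0 (Suc k) t - picard x0 k t) \<le> M k" if t: "t \<in> {0..T}" for k t
  proof -
    have "norm (picard x0 (Suc k) t - picard x0 k t) \<le> norm x0 * (K * t) ^ Suc k / fact (Suc k)"
      by (rule picard_increment_bound[OF K t])
    also have "\<dots> \<le> norm x0 * (K * T) ^ Suc k / fact (Suc k)"
      using t K by (intro divide_right_mono mult_left_mono power_mono) auto
    finally show ?thesis by (simp add: M_def)
  qed
  have "summable (\<lambda>k. norm x0 * ((K * T) ^ k / fact k))"
    using summable_exp[of "K * T"] by (intro summable_mult) (simp add: divide_inverse_commute)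
  then have "summable M" unfolding M_def by (subst summable_Suc_iff)
  then have "uniform_limit {0..T} (\<lambda>n t. \<Sum>i<n. picard x0 (Suc i) t - picard x0 i t)
      (\<lambda>t. \<Sum>i. picard x0 (Suc i) t - picard x0 i t) sequentially"
    by (intro Weierstrass_m_test[OF M])
  then have "uniform_limit {0..T} (\<lambda>n t. x0 + (\<Sum>i<n. picard x0 (Suc i) t - picard x0 i t))
      (picard_limit x0) sequentially"
    unfolding picard_limit_def by (intro uniform_limit_add uniform_limit_const)
  moreover have "x0 + (\<Sum>i<n. picard x0 (Suc i) t - picard x0 i t) = picard x0 n t" for n t
    by (subst sum_lessThan_telescope) simp
  ultimately show ?thesis by simp
qed

text \<open>The limit solves the integral equation, since the integrals of the iterates converge.\<close>
lemma picard_limit_solves: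
  assumes t: "t \<ge> 0"
  shows "picard_limit x0 t = x0 + integral {0..t} (\<lambda>s. A s (picard_limit x0 s))"
proof -
  obtain K where K: "K \<ge> 0" "\<forall>s\<in>{0..t}. \<forall>x. norm (A s x) \<le> K * norm x" using bounded_A by blast
  have "uniform_limit {0..t} (\<lambda>n s. A s (picard x0 n s)) (\<lambda>s. A s (picard_limit x0 s)) sequentially"
    by (rule uniform_limit_apply_linear_family[OF linear_A K picard_uniform_limit])
  then obtain I J where IJ: "\<And>n. ((\<lambda>s. A s (picard x0 n s)) has_integral I n) {0..t}"
      "((\<lambda>s. A s (picard_limit x0 s)) has_integral J) {0..t}" "I \<longlonglongrightarrow> J"
    by (rule uniform_limit_integral) (auto intro: continuous_A picard_continuous)
  have "integral {0..t} (\<lambda>s. A s (picard x0 n s)) = I n" for n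
    using IJ(1) by (rule integral_unique)
  then have "(\<lambda>n. picard x0 (Suc n) t) \<longlonglongrightarrow> x0 + J"
    using IJ(3) by (simp add: picard_Suc integral_unique tendsto_add)
  moreover have "(\<lambda>n. picard x0 (Suc n) t) \<longlonglongrightarrow> picard_limit x0 t"
    using tendsto_uniform_limitI[OF picard_uniform_limit[where T=t], of t] t by (intro LIMSEQ_Suc) auto
  ultimately have "picard_limit x0 t = x0 + J" using LIMSEQ_unique by blast
  then show ?thesis using IJ(2) by (simp add: integral_unique)
qed

lemma integral_solution_exists:
  "\<exists>x. (\<forall>T. continuous_on {0..T} x) \<and> (\<forall>t\<ge>0. x t = x0 + integral {0..t} (\<lambda>s. A s (x s)))"
proof (intro exI conjI allI impI)
  show "continuous_on {0..T} (picard_limit x0)" for T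
    by (rule uniform_limit_theorem[OF _ picard_uniform_limit]) (auto simp: picard_continuous)
qed (rule picard_limit_solves)

end

lemma has_vector_derivative_from_integrals:
  fixes g :: "real \<Rightarrow> 'a::banach"
  assumes g: "\<And>T. continuous_on {-T..T} g"
    and fwd: "\<And>t. t \<ge> 0 \<Longrightarrow> z t = z 0 + integral {0..t} g"
    and bwd: "\<And>t. t \<le> 0 \<Longrightarrow> z t = z 0 - integral {t..0} g"
  shows "(z has_vector_derivative g t) (at t)"
proof -
  define T where "T = \<bar>t\<bar> + 1"
  have tin: "t \<in> {-T<..<T}" unfolding T_def by auto
  have gi: "g integrable_on {a..b}" if "-T \<le> a" "b \<le> T" for a b
    by (rule integrable_continuous_real[OF continuous_on_subset[OF g[of T]]]) (use that in auto)
  have zeq: "z u = z 0 + integral {-T..u} g - integral {-T..0} g" if u: "u \<in> {-T<..<T}" for u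
  proof (cases "u \<ge> 0")
    case True
    have "integral {-T..0} g + integral {0..u} g = integral {-T..u} g"
      using Henstock_Kurzweil_Integration.integral_combine[of "-T" 0 u g] gi[of "-T" u] True u by (auto simp: T_def)
    then show ?thesis using fwd[OF True] by (simp add: algebra_simps)
  next
    case False
    have split: "integral {-T..u} g + integral {u..0} g = integral {-T..0} g"
      using Henstock_Kurzweil_Integration.integral_combine[of "-T" u 0 g] gi[of "-T" 0] False u by (auto simp: T_def)
    have "z u = z 0 - integral {u..0} g" using bwd[of u] False by simp
    then show ?thesis unfolding split[symmetric] by (simp add: algebra_simps)
  qed
  have "((\<lambda>u. integral {-T..u} g) has_vector_derivative g t) (at t within {-T..T})"
    by (rule integral_has_vector_derivative[OF g]) (use tin in auto)
  moreover have "at t within {-T..T} = at t"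
    using tin by (intro at_within_interior) (simp add: interior_atLeastAtMost_real)
  ultimately have "((\<lambda>u. z 0 + integral {-T..u} g - integral {-T..0} g) has_vector_derivative g t) (at t)"
    by (auto intro!: derivative_eq_intros)
  then show ?thesis
  proof (rule has_vector_derivative_transform_within_open[OF _ _ tin])
    fix u assume "u \<in> {-T<..<T}"
    then show "z 0 + integral {-T..u} g - integral {-T..0} g = z u" by (rule zeq[symmetric])
  qed simp
qed

lemma forward_linear_ode_both_directions:
  fixes A :: "real \<Rightarrow> 'a::euclidean_space \<Rightarrow> 'a"
  assumes lin: "\<And>t. linear (A t)"
    and bnd: "\<And>T. \<exists>K\<ge>0. \<forall>t\<in>{-T..T}. \<forall>x. norm (A t x) \<le> K * norm x"
    and cont: "\<And>S x. continuous_on S x \<Longrightarrow> continuous_on S (\<lambda>t. A t (x t))"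
  shows "forward_linear_ode A" and "forward_linear_ode (\<lambda>t v. - A (-t) v)"
proof (rule forward_linear_ode.intro)
  show "\<exists>K\<ge>0. \<forall>t\<in>{0..T}. \<forall>x. norm (A t x) \<le> K * norm x" for T
  proof -
    obtain K where "K \<ge> 0" "\<forall>t\<in>{-T..T}. \<forall>x. norm (A t x) \<le> K * norm x" using bnd by blast
    then show ?thesis by (intro exI[of _ K]) auto
  qed
next
  show "forward_linear_ode (\<lambda>t v. - A (-t) v)"
  proof (rule forward_linear_ode.intro)
    show "linear (\<lambda>v. - A (-t) v)" for t
      by (rule linearI) (simp_all add: linear_add[OF lin] linear_scale[OF lin])
    show "\<exists>K\<ge>0. \<forall>t\<in>{0..T}. \<forall>x. norm (- A (-t) x) \<le> K * norm x" for T
    proof -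
      obtain K where "K \<ge> 0" "\<forall>t\<in>{-T..T}. \<forall>x. norm (A t x) \<le> K * norm x" using bnd by blast
      then show ?thesis by (intro exI[of _ K]) auto
    qed
    show "continuous_on S (\<lambda>t. - A (-t) (y t))" if y: "continuous_on S y" for S y
    proof -
      have "continuous_on (uminus ` S) (\<lambda>u. A u (y (- u)))"
        by (rule cont, rule continuous_on_compose2[OF y]) (auto intro: continuous_intros)
      then have "continuous_on S (\<lambda>t. A (- t) (y (- (- t))))"
        by (rule continuous_on_compose2) (auto intro: continuous_intros)
      then show ?thesis by (auto intro: continuous_intros)
    qed
  qed
qed (use lin cont in blast)+

lemma continuous_on_glue_reflection:
  fixes x y :: "real \<Rightarrow> 'a::topological_space"
  assumes x: "\<And>T. continuous_on {0..T} x" and y: "\<And>T. continuous_on {0..T} y" and xy: "x 0 = y 0"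
  shows "continuous_on {-T..T} (\<lambda>t. if 0 \<le> t then x t else y (-t))"
proof -
  let ?z = "\<lambda>t. if 0 \<le> t then x t else y (-t)"
  have "continuous_on {0..T} ?z" by (rule continuous_on_eq[OF x]) auto
  moreover have "continuous_on {-T..0} ?z"
  proof (rule continuous_on_eq)
    show "continuous_on {-T..0} (\<lambda>t. y (- t))"
      by (rule continuous_on_compose2[OF y[of T]]) (auto intro: continuous_intros)
  qed (use xy in auto)
  ultimately have "continuous_on ({-T..0} \<union> {0..T}) ?z" by (intro continuous_on_closed_Un) auto
  moreover have "{-T..0} \<union> {0..T} = {-T..T}" if "T \<ge> 0" using that by auto
  ultimately show ?thesis by (cases "T \<ge> 0") auto
qed

text \<open>Global existence for a linear ODE: solve forward in time, and backward by solving the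
  time-reversed equation forward, then glue at \<open>t = 0\<close>.\<close>
lemma linear_ode_exists:
  fixes A :: "real \<Rightarrow> 'a::euclidean_space \<Rightarrow> 'a"
  assumes lin: "\<And>t. linear (A t)"
    and bnd: "\<And>T. \<exists>K\<ge>0. \<forall>t\<in>{-T..T}. \<forall>x. norm (A t x) \<le> K * norm x"
    and cont: "\<And>S x. continuous_on S x \<Longrightarrow> continuous_on S (\<lambda>t. A t (x t))"
  shows "\<exists>x. x 0 = x0 \<and> (\<forall>t. (x has_vector_derivative A t (x t)) (at t))"
proof -
  define B where "B t v = - A (-t) v" for t v
  interpret fwd: forward_linear_ode A
    by (rule forward_linear_ode_both_directions(1)[OF lin bnd cont])
  interpret bwd: forward_linear_ode B
    unfolding B_def by (rule forward_linear_ode_both_directions(2)[OF lin bnd cont])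
  obtain x where x: "\<And>T. continuous_on {0..T} x" "\<And>t. t \<ge> 0 \<Longrightarrow> x t = x0 + integral {0..t} (\<lambda>s. A s (x s))"
    using fwd.integral_solution_exists by blast
  obtain y where y: "\<And>T. continuous_on {0..T} y" "\<And>t. t \<ge> 0 \<Longrightarrow> y t = x0 + integral {0..t} (\<lambda>s. B s (y s))"
    using bwd.integral_solution_exists by blast
  have x0': "x 0 = x0" and y0: "y 0 = x0" using x(2) y(2) by auto
  define z where "z t = (if 0 \<le> t then x t else y (-t))" for t
  have z_neg: "z t = y (- t)" if "t \<le> 0" for t using that x0' y0 by (auto simp: z_def)
  have zc: "continuous_on {-T..T} z" for T
    unfolding z_def[abs_def] using x(1) y(1) x0' y0 by (intro continuous_on_glue_reflection) auto
  have "(z has_vector_derivative A t (z t)) (at t)" for t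
  proof (rule has_vector_derivative_from_integrals[OF cont[OF zc]])
    fix t :: real assume t: "t \<ge> 0"
    have "integral {0..t} (\<lambda>s. A s (x s)) = integral {0..t} (\<lambda>s. A s (z s))"
      by (rule integral_cong) (auto simp: z_def)
    then show "z t = z 0 + integral {0..t} (\<lambda>s. A s (z s))" using x(2)[OF t] t x0' by (simp add: z_def)
  next
    fix t :: real assume t: "t \<le> 0"
    have "integral {0..-t} (\<lambda>s. B s (y s)) = - integral {0..-t} (\<lambda>s. A (-s) (z (-s)))"
      by (subst integral_neg[symmetric]) (auto intro!: integral_cong simp: B_def z_neg)
    also have "integral {0..-t} (\<lambda>s. A (-s) (z (-s))) = integral {t..0} (\<lambda>s. A s (z s))"
      using Henstock_Kurzweil_Integration.integral_reflect_real[of 0 t "\<lambda>s. A s (z s)"] by simp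
    finally show "z t = z 0 - integral {t..0} (\<lambda>s. A s (z s))"
      using y(2)[of "-t"] t x0' y0 by (simp add: z_neg)
  qed
  moreover have "z 0 = x0" using x0' by (simp add: z_def)
  ultimately show ?thesis by blast
qed

text \<open>Gronwall's inequality in the form needed for uniqueness: a nonnegative function vanishing
  at \<open>0\<close> whose derivative is bounded by \<open>K\<close> times itself vanishes identically.\<close>
lemma gronwall_zero:
  fixes g g' :: "real \<Rightarrow> real"
  assumes nn: "\<And>t. g t \<ge> 0" and g0: "g 0 = 0"
    and d: "\<And>t. (g has_real_derivative g' t) (at t)"
    and b: "\<And>t. t \<in> {-T..T} \<Longrightarrow> \<bar>g' t\<bar> \<le> K * g t" and K: "K \<ge> 0"
    and t: "t \<in> {-T..T}"
  shows "g t = 0"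
proof (cases "t \<ge> 0")
  case True
  define h where "h s = exp (- K * s) * g s" for s
  have "h t \<le> h 0"
  proof (rule DERIV_nonpos_imp_nonincreasing[of 0 t h, OF True])
    fix s assume s: "0 \<le> s" "s \<le> t"
    have "DERIV h s :> exp (- K * s) * (g' s - K * g s)"
      unfolding h_def by (auto intro!: derivative_eq_intros d simp: algebra_simps)
    moreover have "g' s - K * g s \<le> 0" using b[of s] s t by auto
    ultimately show "\<exists>y. DERIV h s :> y \<and> y \<le> 0" by (meson exp_gt_zero mult_le_0_iff less_le)
  qed
  then have "g t \<le> 0" by (simp add: h_def g0 mult_le_0_iff)
  then show ?thesis using nn[of t] by simp
next
  case False
  define h where "h s = exp (K * s) * g s" for s
  have "h t \<le> h 0"
  proof (rule DERIV_nonneg_imp_nondecreasing[of t 0 h])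
    show "t \<le> 0" using False by simp
    fix s assume s: "t \<le> s" "s \<le> 0"
    have "DERIV h s :> exp (K * s) * (g' s + K * g s)"
      unfolding h_def by (auto intro!: derivative_eq_intros d simp: algebra_simps)
    moreover have "g' s + K * g s \<ge> 0" using b[of s] s t by auto
    ultimately show "\<exists>y. DERIV h s :> y \<and> y \<ge> 0" by (meson exp_ge_zero zero_le_mult_iff)
  qed
  then have "g t \<le> 0" by (simp add: h_def g0 mult_le_0_iff)
  then show ?thesis using nn[of t] by simp
qed

text \<open>Uniqueness for a locally bounded linear ODE: apply Gronwall to \<open>|x|\<^sup>2\<close>.\<close>
lemma linear_ode_unique:
  fixes A :: "real \<Rightarrow> 'a::euclidean_space \<Rightarrow> 'a"
  assumes bnd: "\<And>T. \<exists>K\<ge>0. \<forall>t\<in>{-T..T}. \<forall>x. norm (A t x) \<le> K * norm x"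
    and d: "\<And>t. (x has_vector_derivative A t (x t)) (at t)"
    and x0: "x 0 = 0"
  shows "x t = 0"
proof -
  define T where "T = \<bar>t\<bar>"
  obtain K where K: "K \<ge> 0" "\<forall>t\<in>{-T..T}. \<forall>x. norm (A t x) \<le> K * norm x" using bnd by blast
  define g where "g s = inner (x s) (x s)" for s
  have gd: "(g has_real_derivative 2 * inner (x s) (A s (x s))) (at s)" for s
  proof -
    have "(g has_derivative (\<lambda>h. inner (x s) (h *\<^sub>R A s (x s)) + inner (h *\<^sub>R A s (x s)) (x s))) (at s)"
      unfolding g_def using d[of s] unfolding has_vector_derivative_def
      by (auto intro!: derivative_eq_intros)
    then have "(g has_derivative (\<lambda>h. h * (2 * inner (x s) (A s (x s))))) (at s)"
      by (simp add: inner_commute algebra_simps)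
    moreover have "(\<lambda>h. h * (2 * inner (x s) (A s (x s)))) = (*) (2 * inner (x s) (A s (x s)))"
      by (auto simp: fun_eq_iff)
    ultimately show ?thesis by (simp add: has_field_derivative_def)
  qed
  have "g t = 0"
  proof (rule gronwall_zero[OF _ _ gd, where T=T and K="2*K"])
    fix s assume s: "s \<in> {-T..T}"
    have "\<bar>2 * inner (x s) (A s (x s))\<bar> \<le> 2 * (norm (x s) * norm (A s (x s)))"
      using Cauchy_Schwarz_ineq2[of "x s" "A s (x s)"] by simp
    also have "\<dots> \<le> 2 * (norm (x s) * (K * norm (x s)))"
      using K s by (intro mult_left_mono) auto
    also have "\<dots> = 2 * K * g s" by (simp add: g_def power2_norm_eq_inner[symmetric] power2_eq_square)
    finally show "\<bar>2 * inner (x s) (A s (x s))\<bar> \<le> 2 * K * g s" .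
  qed (use K x0 in \<open>auto simp: g_def T_def\<close>)
  then show ?thesis by (simp add: g_def)
qed


lemma norm_smult_cvec: "norm (c *s (x::complex^'n)) = cmod c * norm x"
  by (simp add: norm_vec_def norm_mult L2_set_right_distrib)

lemma bounded_linear_smult_cvec: "bounded_linear (\<lambda>x::complex^'n. c *s x)"
proof (rule bounded_linear_intro[where K="cmod c"])
  show "c *s (r *\<^sub>R x) = r *\<^sub>R (c *s x)" for r and x :: "complex^'n"
    by (simp add: vec_eq_iff scaleR_conv_of_real algebra_simps)
qed (simp_all add: vector_add_ldistrib norm_smult_cvec)

definition entry_sum :: "complex^'n^'m \<Rightarrow> real" where
  "entry_sum M = (\<Sum>i\<in>UNIV. \<Sum>j\<in>UNIV. norm (M $ i $ j))"

lemma norm_matrix_vector_le: "norm (M *v x) \<le> entry_sum M * norm (x::complex^'n)"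
proof -
  have "norm (M *v x) \<le> (\<Sum>i\<in>UNIV. norm ((M *v x) $ i))"
    unfolding norm_vec_def by (rule L2_set_le_sum) simp
  also have "\<dots> \<le> (\<Sum>i\<in>UNIV. \<Sum>j\<in>UNIV. norm (M $ i $ j) * norm x)"
  proof (rule sum_mono)
    fix i
    have "norm ((M *v x) $ i) \<le> (\<Sum>j\<in>UNIV. norm (M $ i $ j * x $ j))"
      unfolding matrix_vector_mult_def by (simp add: norm_sum)
    also have "\<dots> \<le> (\<Sum>j\<in>UNIV. norm (M $ i $ j) * norm x)"
      by (intro sum_mono) (simp add: norm_mult Finite_Cartesian_Product.norm_nth_le mult_left_mono)
    finally show "norm ((M *v x) $ i) \<le> (\<Sum>j\<in>UNIV. norm (M $ i $ j) * norm x)" .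
  qed
  also have "\<dots> = entry_sum M * norm x" by (simp add: entry_sum_def sum_distrib_right)
  finally show ?thesis .
qed

lemma continuous_on_matrix_vector:
  "continuous_on S M \<Longrightarrow> continuous_on S x \<Longrightarrow> continuous_on S (\<lambda>t. (M t :: complex^'n^'m) *v x t)"
  unfolding matrix_vector_mult_def by (intro continuous_intros)

lemma continuous_on_entry_sum: "continuous_on S M \<Longrightarrow> continuous_on S (\<lambda>t. entry_sum (M t))"
  unfolding entry_sum_def by (intro continuous_intros)

lemma continuous_on_cmat: "continuous_on S A \<Longrightarrow> continuous_on S (\<lambda>t. cmat (A t :: real^'n^'m))"
  unfolding cmat_def by (intro continuous_intros)

lemma continuous_on_matrix_mult:
  "continuous_on S A \<Longrightarrow> continuous_on S B \<Longrightarrow>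
    continuous_on S (\<lambda>t. (A t :: real^'n^'m) ** (B t :: real^'k^'n))"
  unfolding matrix_matrix_mult_def by (intro continuous_intros)

lemma continuous_on_interval_bounded:
  fixes f :: "real \<Rightarrow> real"
  assumes "continuous_on {a..b} f"
  shows "\<exists>K\<ge>0. \<forall>t\<in>{a..b}. f t \<le> K"
proof -
  have "bounded (f ` {a..b})" by (rule compact_imp_bounded[OF compact_continuous_image[OF assms]]) simp
  then obtain K where "\<forall>y\<in>f ` {a..b}. norm y \<le> K" by (auto simp: bounded_iff)
  then show ?thesis by (intro exI[of _ "\<bar>K\<bar>"]) force
qed


section \<open>The Jacobi equation as a first-order linear system\<close>

lemma smooth_fun_facts:
  assumes "smooth_fun (f :: real \<Rightarrow> 'a::real_normed_vector)"
  shows "continuous_on UNIV f" "continuous_on UNIV (vd f)" "\<And>t. (f has_vector_derivative vd f t) (at t)"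
proof -
  obtain D where D: "D 0 = f" "\<And>k t. (D k has_vector_derivative D (Suc k) t) (at t)"
    using assms unfolding smooth_fun_def by blast
  have c: "continuous_on UNIV (D k)" for k
    by (intro continuous_at_imp_continuous_on ballI has_vector_derivative_continuous[OF D(2)])
  have v: "vd f = D 1" using vector_derivative_at[OF D(2)[of 0]] D(1) by auto
  show "continuous_on UNIV f" using c[of 0] D(1) by simp
  show "continuous_on UNIV (vd f)" unfolding v by (rule c)
  show "(f has_vector_derivative vd f t) (at t)" for t using D v by (metis One_nat_def)
qed

text \<open>The system \<open>(V, V')' = jacobi_system t (V, V')\<close> equivalent to (J).\<close>
definition jacobi_system :: "(real \<Rightarrow> real^'n^'n) \<Rightarrow> (real \<Rightarrow> real^'n^'n) \<Rightarrow> real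
    \<Rightarrow> ((complex^'n) \<times> (complex^'n)) \<Rightarrow> ((complex^'n) \<times> (complex^'n))" where
  "jacobi_system Gam R t x = (snd x, - ((2::complex) *s (cmat (Gam t) *v snd x))
      - cmat (vd Gam t + Gam t ** Gam t - R t) *v fst x)"

lemma jacobi_system_linear: "linear (jacobi_system Gam R t)"
proof -
  have lin_mv: "linear ((*v) M)" for M :: "complex^'n^'n" by (simp add: bounded_linear.linear)
  have lin_sm: "linear (\<lambda>x::complex^'n. c *s x)" for c
    using bounded_linear_smult_cvec bounded_linear.linear by blast
  show ?thesis
    by (rule linearI)
       (simp_all add: jacobi_system_def linear_add[OF lin_mv] linear_add[OF lin_sm]
         linear_scale[OF lin_mv] linear_scale[OF lin_sm] algebra_simps)
qed

lemma jacobi_sol_system: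
  assumes "jacobi_sol Gam R V"
  shows "(V has_vector_derivative vd V t) (at t)"
    and "((\<lambda>t. (V t, vd V t)) has_vector_derivative jacobi_system Gam R t (V t, vd V t)) (at t)"
proof -
  obtain V1 V2 where H: "\<And>t. (V has_vector_derivative V1 t) (at t)" "\<And>t. (V1 has_vector_derivative V2 t) (at t)"
    "\<And>t. V2 t + (2::complex) *s (cmat (Gam t) *v V1 t) + cmat (vd Gam t + Gam t ** Gam t - R t) *v V t = 0"
    using assms unfolding jacobi_sol_def by blast
  have v: "vd V t = V1 t" for t using H(1) by (simp add: vector_derivative_at)
  show "(V has_vector_derivative vd V t) (at t)" using H(1)[of t] by (simp add: v)
  have "V2 t = snd (jacobi_system Gam R t (V t, V1 t))"
    using H(3)[of t] unfolding jacobi_system_def by (simp add: eq_neg_iff_add_eq_0 algebra_simps)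
  then show "((\<lambda>t. (V t, vd V t)) has_vector_derivative jacobi_system Gam R t (V t, vd V t)) (at t)"
    using has_vector_derivative_Pair[OF H(1)[of t] H(2)[of t]] v by (simp add: jacobi_system_def)
qed

lemma system_jacobi_sol:
  assumes "\<And>t. (x has_vector_derivative jacobi_system Gam R t (x t)) (at t)"
  shows "jacobi_sol Gam R (\<lambda>t. fst (x t))" and "vd (\<lambda>t. fst (x t)) t = snd (x t)"
proof -
  note d = bounded_linear.has_vector_derivative[OF _ assms]
  have d1: "((\<lambda>t. fst (x t)) has_vector_derivative snd (x t)) (at t)" for t
    using d[OF bounded_linear_fst] by (simp add: jacobi_system_def)
  show "jacobi_sol Gam R (\<lambda>t. fst (x t))"
    unfolding jacobi_sol_def
    using d1 d[OF bounded_linear_snd] by (intro exI[of _ "\<lambda>t. snd (x t)"] exI allI conjI) (auto simp: jacobi_system_def)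
  show "vd (\<lambda>t. fst (x t)) t = snd (x t)" using d1 by (simp add: vector_derivative_at)
qed


section \<open>The space of solutions\<close>

interpretation fs: vector_space "fscale :: complex \<Rightarrow> (real \<Rightarrow> complex^'n) \<Rightarrow> _"
  by unfold_locales (simp_all add: fscale_def fun_eq_iff vec_eq_iff algebra_simps)

lemma cdim_fs: "cdim = fs.dim" by (simp add: cdim_def fun_eq_iff)
lemma csubspace_fs: "csubspace = fs.subspace" by (simp add: csubspace_def fun_eq_iff)

lemma fscale_apply: "fscale c f t = c *s f t" by (simp add: fscale_def)

lemma sum_fun_apply: "(sum f A) x = sum (\<lambda>a. f a x) A"
  by (induct A rule: infinite_finite_induct) auto

lemma jacobi_sol_zero: "jacobi_sol Gam R 0"
  unfolding jacobi_sol_def by (intro exI[of _ "\<lambda>t. 0"]) (simp add: zero_fun_def)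

lemma jacobi_sol_add:
  assumes "jacobi_sol Gam R V" "jacobi_sol Gam R W"
  shows "jacobi_sol Gam R (V + W)"
proof -
  obtain V1 V2 where V: "\<And>t. (V has_vector_derivative V1 t) (at t)" "\<And>t. (V1 has_vector_derivative V2 t) (at t)"
    "\<And>t. V2 t + (2::complex) *s (cmat (Gam t) *v V1 t) + cmat (vd Gam t + Gam t ** Gam t - R t) *v V t = 0"
    using assms(1) unfolding jacobi_sol_def by blast
  obtain W1 W2 where W: "\<And>t. (W has_vector_derivative W1 t) (at t)" "\<And>t. (W1 has_vector_derivative W2 t) (at t)"
    "\<And>t. W2 t + (2::complex) *s (cmat (Gam t) *v W1 t) + cmat (vd Gam t + Gam t ** Gam t - R t) *v W t = 0"
    using assms(2) unfolding jacobi_sol_def by blast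
  show ?thesis unfolding jacobi_sol_def
  proof (rule exI[of _ "\<lambda>t. V1 t + W1 t"], rule exI[of _ "\<lambda>t. V2 t + W2 t"], intro allI conjI)
    fix t
    show "(V + W has_vector_derivative V1 t + W1 t) (at t)"
      using has_vector_derivative_add[OF V(1) W(1)] by (simp add: plus_fun_def)
    show "((\<lambda>t. V1 t + W1 t) has_vector_derivative V2 t + W2 t) (at t)"
      using has_vector_derivative_add[OF V(2) W(2)] by simp
    show "V2 t + W2 t + (2::complex) *s (cmat (Gam t) *v (V1 t + W1 t))
        + cmat (vd Gam t + Gam t ** Gam t - R t) *v (V + W) t = 0"
      using arg_cong2[OF V(3) W(3), of "(+)" t t]
      by (simp add: matrix_vector_right_distrib vector_add_ldistrib algebra_simps)
  qed
qed

lemma jacobi_sol_scale: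
  assumes "jacobi_sol Gam R V"
  shows "jacobi_sol Gam R (fscale c V)"
proof -
  obtain V1 V2 where V: "\<And>t. (V has_vector_derivative V1 t) (at t)" "\<And>t. (V1 has_vector_derivative V2 t) (at t)"
    "\<And>t. V2 t + (2::complex) *s (cmat (Gam t) *v V1 t) + cmat (vd Gam t + Gam t ** Gam t - R t) *v V t = 0"
    using assms(1) unfolding jacobi_sol_def by blast
  note scale = bounded_linear.has_vector_derivative[OF bounded_linear_smult_cvec]
  show ?thesis unfolding jacobi_sol_def
  proof (rule exI[of _ "\<lambda>t. c *s V1 t"], rule exI[of _ "\<lambda>t. c *s V2 t"], intro allI conjI)
    fix t
    show "(fscale c V has_vector_derivative c *s V1 t) (at t)"
      using scale[OF V(1)] by (simp add: fscale_def)
    show "((\<lambda>t. c *s V1 t) has_vector_derivative c *s V2 t) (at t)"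
      using scale[OF V(2)] by simp
    show "c *s V2 t + (2::complex) *s (cmat (Gam t) *v (c *s V1 t))
        + cmat (vd Gam t + Gam t ** Gam t - R t) *v fscale c V t = 0"
      using arg_cong[OF V(3), of "\<lambda>v. c *s v" t]
      by (simp add: vector_scalar_commute vector_add_ldistrib fscale_def vector_smult_assoc mult.commute)
  qed
qed

lemma vd_add:
  assumes "jacobi_sol Gam R V" "jacobi_sol Gam R W" shows "vd (V + W) t = vd V t + vd W t"
  using has_vector_derivative_add[OF jacobi_sol_system(1)[OF assms(1)] jacobi_sol_system(1)[OF assms(2)]]
  by (simp add: vector_derivative_at plus_fun_def)

lemma vd_scale:
  assumes "jacobi_sol Gam R V" shows "vd (fscale c V) t = c *s vd V t"
  using bounded_linear.has_vector_derivative[OF bounded_linear_smult_cvec jacobi_sol_system(1)[OF assms], of c t]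
  by (simp add: vector_derivative_at fscale_def)

lemma vd_zero: "vd (0::real \<Rightarrow> complex^'n) t = 0"
  by (simp add: zero_fun_def vector_derivative_at)

lemma jacobi_sols_subspace: "fs.subspace {V. jacobi_sol Gam R V}"
  by (rule fs.subspaceI) (auto intro: jacobi_sol_zero jacobi_sol_add jacobi_sol_scale)

abbreviation dirichlet_sols :: "(real \<Rightarrow> real^'n^'n) \<Rightarrow> (real \<Rightarrow> real^'n^'n) \<Rightarrow> (real \<Rightarrow> complex^'n) set" where
  "dirichlet_sols Gam R \<equiv> {V. jacobi_sol Gam R V \<and> V 0 = 0 \<and> V 1 = 0}"

lemma dirichlet_sols_subspace: "fs.subspace (dirichlet_sols Gam R)"
  by (rule fs.subspaceI)
     (auto intro: jacobi_sol_zero jacobi_sol_add jacobi_sol_scale jacobi_sol_scale[unfolded fscale_def]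
       simp: fscale_def)

lemma J2_subspace: "fs.subspace (J2 Gam R z)"
  unfolding J2_def
  by (rule fs.subspaceI)
     (auto intro: jacobi_sol_zero jacobi_sol_add jacobi_sol_scale[unfolded fscale_def]
       simp: fscale_def vector_add_ldistrib vector_smult_assoc mult.commute)


locale jacobi_coefficients =
  fixes Gam R :: "real \<Rightarrow> real^'n::finite^'n"
  assumes continuous_Gam: "continuous_on UNIV Gam"
    and continuous_dGam: "continuous_on UNIV (vd Gam)"
    and continuous_R: "continuous_on UNIV R"
begin

lemma continuous_coefficients:
  "continuous_on S (\<lambda>t. cmat (Gam t))"
  "continuous_on S (\<lambda>t. cmat (vd Gam t + Gam t ** Gam t - R t))"
  by (intro continuous_on_cmat continuous_intros continuous_on_matrix_mult
      continuous_on_subset[OF continuous_Gam] continuous_on_subset[OF continuous_dGam]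
      continuous_on_subset[OF continuous_R]; simp)+

lemma jacobi_system_bounded:
  "\<exists>K\<ge>0. \<forall>t\<in>{-T..T}. \<forall>x. norm (jacobi_system Gam R t x) \<le> K * norm x"
proof -
  obtain a where a: "a \<ge> 0" "\<forall>t\<in>{-T..T}. entry_sum (cmat (Gam t)) \<le> a"
    using continuous_on_interval_bounded[OF continuous_on_entry_sum[OF continuous_coefficients(1)]] by blast
  obtain b where b: "b \<ge> 0" "\<forall>t\<in>{-T..T}. entry_sum (cmat (vd Gam t + Gam t ** Gam t - R t)) \<le> b"
    using continuous_on_interval_bounded[OF continuous_on_entry_sum[OF continuous_coefficients(2)]] by blast
  show ?thesis
  proof (intro exI[of _ "1 + 2 * a + b"] conjI ballI allI)
    show "0 \<le> 1 + 2 * a + b" using a b by simp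
    fix t and x :: "(complex^'n) \<times> (complex^'n)" assume t: "t \<in> {-T..T}"
    let ?G = "cmat (Gam t)" and ?C = "cmat (vd Gam t + Gam t ** Gam t - R t)"
    have nv: "norm (fst x) \<le> norm x" using norm_fst_le[of "fst x" "snd x"] by simp
    have nw: "norm (snd x) \<le> norm x" using norm_snd_le[of "snd x" "fst x"] by simp
    have entry_sum_nonneg: "entry_sum M \<ge> 0" for M :: "complex^'n^'n" by (simp add: entry_sum_def sum_nonneg)
    have "norm (?G *v snd x) \<le> a * norm x"
      using norm_matrix_vector_le[of ?G] a t nw entry_sum_nonneg[of ?G] by (meson mult_mono norm_ge_zero order_trans)
    moreover have "norm (?C *v fst x) \<le> b * norm x"
      using norm_matrix_vector_le[of ?C] b t nv entry_sum_nonneg[of ?C] by (meson mult_mono norm_ge_zero order_trans)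
    moreover have "norm (jacobi_system Gam R t x) \<le> norm (snd x) + norm (- ((2::complex) *s (?G *v snd x)) - ?C *v fst x)"
      unfolding jacobi_system_def by (rule norm_Pair_le)
    moreover have "norm (- ((2::complex) *s (?G *v snd x)) - ?C *v fst x) \<le> 2 * norm (?G *v snd x) + norm (?C *v fst x)"
      using norm_triangle_ineq4[of "- ((2::complex) *s (?G *v snd x))" "?C *v fst x"] by (simp add: norm_smult_cvec)
    ultimately show "norm (jacobi_system Gam R t x) \<le> (1 + 2 * a + b) * norm x"
      using nw by (simp add: algebra_simps)
  qed
qed

lemma jacobi_system_continuous:
  assumes x: "continuous_on S x"
  shows "continuous_on S (\<lambda>t. jacobi_system Gam R t (x t))"
proof -
  have s: "continuous_on S (\<lambda>t. snd (x t))" and f: "continuous_on S (\<lambda>t. fst (x t))"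
    using x by (auto intro: continuous_intros)
  show ?thesis unfolding jacobi_system_def
    by (intro continuous_intros s bounded_linear.continuous_on[OF bounded_linear_smult_cvec]
        continuous_on_matrix_vector[OF continuous_coefficients(1) s]
        continuous_on_matrix_vector[OF continuous_coefficients(2) f])
qed

lemma jacobi_sol_exists: "\<exists>V. jacobi_sol Gam R V \<and> V 0 = v \<and> vd V 0 = w"
proof -
  obtain x where x: "x 0 = (v, w)" "\<And>t. (x has_vector_derivative jacobi_system Gam R t (x t)) (at t)"
    using linear_ode_exists[OF jacobi_system_linear jacobi_system_bounded jacobi_system_continuous] by blast
  show ?thesis using system_jacobi_sol[OF x(2)] x(1) by (intro exI[of _ "\<lambda>t. fst (x t)"]) auto
qed

lemma jacobi_sol_unique:
  assumes U: "jacobi_sol Gam R U" and V: "jacobi_sol Gam R V" and e: "U 0 = V 0" "vd U 0 = vd V 0"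
  shows "U = V"
proof -
  define D where "D = U + fscale (-1) V"
  have D: "jacobi_sol Gam R D" unfolding D_def using jacobi_sol_add[OF U jacobi_sol_scale[OF V]] .
  have D_eq: "D t = U t - V t" "vd D t = vd U t - vd V t" for t
    using vd_add[OF U jacobi_sol_scale[OF V, of "-1"], of t] vd_scale[OF V, of "-1" t]
    by (simp_all add: D_def fscale_def vec_eq_iff)
  have "(D t, vd D t) = 0" for t
    by (rule linear_ode_unique[OF jacobi_system_bounded jacobi_sol_system(2)[OF D]])
       (simp add: D_eq e zero_prod_def)
  then show ?thesis by (auto simp: fun_eq_iff D_eq zero_prod_def)
qed

lemma jacobi_sol_eq_0:
  assumes "jacobi_sol Gam R V" "V 0 = 0" "vd V 0 = 0"
  shows "V = 0"
  using jacobi_sol_unique[OF assms(1) jacobi_sol_zero] assms(2,3) by (simp add: vd_zero)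

end


lemma linear_on_subspace_combination:
  fixes F :: "(real \<Rightarrow> complex^'n) \<Rightarrow> complex^'m"
  assumes S: "fs.subspace S" and add: "\<And>x y. x \<in> S \<Longrightarrow> y \<in> S \<Longrightarrow> F (x + y) = F x + F y"
    and scale: "\<And>c x. x \<in> S \<Longrightarrow> F (fscale c x) = c *s F x"
    and T: "finite T" "T \<subseteq> S"
  shows "(\<Sum>w\<in>T. fscale (u w) w) \<in> S \<and> F (\<Sum>w\<in>T. fscale (u w) w) = (\<Sum>w\<in>T. u w *s F w)"
  using T
proof (induction T rule: finite_induct)
  case empty
  show ?case using fs.subspace_0[OF S] scale[of 0 0] by (simp add: zero_fun_def)
next
  case (insert a T)
  have a: "a \<in> S" "fscale (u a) a \<in> S" using insert.prems fs.subspace_scale[OF S] by auto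
  have IH: "(\<Sum>w\<in>T. fscale (u w) w) \<in> S" "F (\<Sum>w\<in>T. fscale (u w) w) = (\<Sum>w\<in>T. u w *s F w)"
    using insert by auto
  have "(\<Sum>w\<in>insert a T. fscale (u w) w) = fscale (u a) a + (\<Sum>w\<in>T. fscale (u w) w)"
    by (rule sum.insert[OF insert.hyps])
  moreover have "(\<Sum>w\<in>insert a T. u w *s F w) = u a *s F a + (\<Sum>w\<in>T. u w *s F w)"
    by (rule sum.insert[OF insert.hyps])
  ultimately show ?case
    using fs.subspace_add[OF S a(2) IH(1)] add[OF a(2) IH(1)] scale[OF a(1)] IH(2) by (simp only:)
qed

lemma independent_card_le_injective:
  fixes F :: "(real \<Rightarrow> complex^'n) \<Rightarrow> complex^'m"
  assumes S: "fs.subspace S" and add: "\<And>x y. x \<in> S \<Longrightarrow> y \<in> S \<Longrightarrow> F (x + y) = F x + F y"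
    and scale: "\<And>c x. x \<in> S \<Longrightarrow> F (fscale c x) = c *s F x"
    and inj: "\<And>x. x \<in> S \<Longrightarrow> F x = 0 \<Longrightarrow> x = 0"
    and B: "B \<subseteq> S" "fs.independent B"
  shows "finite B \<and> card B \<le> CARD('m)"
proof -
  have F_comb: "(\<Sum>w\<in>T. fscale (u w) w) \<in> S \<and> F (\<Sum>w\<in>T. fscale (u w) w) = (\<Sum>w\<in>T. u w *s F w)"
    if "finite T" "T \<subseteq> S" for T u
    by (rule linear_on_subspace_combination[where F=F, OF S _ _ that]) (simp_all add: add scale)
  have injB: "inj_on F B"
  proof (rule inj_onI)
    fix x y assume xy: "x \<in> B" "y \<in> B" "F x = F y"
    then have xS: "x \<in> S" and yS: "y \<in> S" using B by auto
    have myS: "fscale (-1) y \<in> S" using fs.subspace_scale[OF S yS] .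
    have "F (x + fscale (-1) y) = 0" using add[OF xS myS] scale[OF yS, of "-1"] xy(3) by simp
    then have "x + fscale (-1) y = 0" using inj fs.subspace_add[OF S xS myS] by blast
    then show "x = y" by (simp add: fun_eq_iff fscale_def)
  qed
  have "vec.independent (F ` B)"
    unfolding vec.independent_explicit_finite_subsets
  proof (intro allI impI ballI)
    fix T u v assume T: "T \<subseteq> F ` B" "finite T" and s: "(\<Sum>v\<in>T. u v *s v) = 0" and v: "v \<in> T"
    define T' where "T' = B \<inter> F -` T"
    have TT': "T = F ` T'" using T(1) unfolding T'_def by auto
    have injT': "inj_on F T'" using injB inj_on_subset T'_def by blast
    have finT': "finite T'" using T(2) TT' injT' finite_image_iff by blast
    have T'S: "T' \<subseteq> S" using B T'_def by auto
    have "(\<Sum>w\<in>T'. u (F w) *s F w) = 0" using s TT' injT' by (simp add: sum.reindex)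
    then have "F (\<Sum>w\<in>T'. fscale (u (F w)) w) = 0" using F_comb[OF finT' T'S] by simp
    then have "(\<Sum>w\<in>T'. fscale (u (F w)) w) = 0" by (rule inj[OF conjunct1[OF F_comb[OF finT' T'S]]])
    moreover obtain w where w: "w \<in> T'" "v = F w" using v TT' by auto
    ultimately have "u (F w) = 0"
      using fs.independentD[OF B(2) finT', of "\<lambda>w. u (F w)"] T'_def by auto
    then show "u v = 0" using w by simp
  qed
  then have "finite (F ` B)" and "card (F ` B) \<le> CARD('m)"
    using vec.finiteI_independent vec.independent_card_le_dim[of "F ` B" UNIV]
    by (auto simp: vec.dim_UNIV card_cart_basis)
  then show ?thesis using injB finite_image_iff card_image by metis
qed

lemma independent_union_trivial_intersection:
  assumes W: "fs.subspace W" and N: "fs.subspace N" and WN: "\<And>x. x \<in> W \<Longrightarrow> x \<in> N \<Longrightarrow> x = 0"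
    and BW: "BW \<subseteq> W" "fs.independent BW" and BN: "BN \<subseteq> N" "fs.independent BN"
  shows "fs.independent (BW \<union> BN)" and "BW \<inter> BN = {}"
proof -
  show disj: "BW \<inter> BN = {}"
  proof (rule ccontr)
    assume "BW \<inter> BN \<noteq> {}"
    then obtain x where x: "x \<in> BW" "x \<in> BN" by auto
    then have "x = 0" using BW BN WN by auto
    then show False using fs.dependent_zero x BW(2) by blast
  qed
  show "fs.independent (BW \<union> BN)"
    unfolding fs.independent_explicit_finite_subsets
  proof (intro allI impI ballI)
    fix T u v assume T: "T \<subseteq> BW \<union> BN" "finite T" and s: "(\<Sum>v\<in>T. fscale (u v) v) = 0" and v: "v \<in> T"
    define T1 where "T1 = T \<inter> BW"
    define T2 where "T2 = T \<inter> BN"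
    have TU: "T = T1 \<union> T2" and dj: "T1 \<inter> T2 = {}" and fin: "finite T1" "finite T2"
      using T disj unfolding T1_def T2_def by auto
    define x where "x = (\<Sum>v\<in>T1. fscale (u v) v)"
    define y where "y = (\<Sum>v\<in>T2. fscale (u v) v)"
    have xy: "x + y = 0" using s unfolding x_def y_def TU by (simp add: sum.union_disjoint[OF fin dj])
    have xW: "x \<in> W" unfolding x_def
      by (rule fs.subspace_sum[OF W]) (use BW T1_def fs.subspace_scale[OF W] in blast)
    have yN: "y \<in> N" unfolding y_def
      by (rule fs.subspace_sum[OF N]) (use BN T2_def fs.subspace_scale[OF N] in blast)
    have "x = - y" using xy by (simp add: eq_neg_iff_add_eq_0)
    then have "x \<in> N" using fs.subspace_neg[OF N yN] by simp
    then have x0: "x = 0" using WN xW by blast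
    then have y0: "y = 0" using xy by simp
    show "u v = 0"
    proof (cases "v \<in> T1")
      case True
      then show ?thesis using fs.independentD[OF BW(2) fin(1) _ x0[unfolded x_def]] T1_def by auto
    next
      case False
      then have "v \<in> T2" using v TU by auto
      then show ?thesis using fs.independentD[OF BN(2) fin(2) _ y0[unfolded y_def]] T2_def by auto
    qed
  qed
qed


section \<open>Poincare map and eigenvalues\<close>

context jacobi_coefficients
begin

lemma poincare_solution:
  assumes "jacobi_sol Gam R V"
  shows "poincare Gam R (V 0, vd V 0 + cmat (Gam 0) *v V 0) = (V 1, vd V 1 + cmat (Gam 0) *v V 1)"
proof -
  have "(THE U. jacobi_sol Gam R U \<and> U 0 = V 0 \<and> vd U 0 = vd V 0) = V"
    by (rule the_equality) (use assms jacobi_sol_unique in auto)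
  then show ?thesis by (simp add: poincare_def)
qed

lemma poincare_eigenvalueI:
  assumes J: "jacobi_sol Gam R V" and nz: "V \<noteq> 0"
    and e1: "V 1 = z *s V 0" and e2: "vd V 1 = z *s vd V 0"
  shows "poincare_eigenvalue Gam R z"
proof -
  define v where "v = V 0"
  define w where "w = vd V 0 + cmat (Gam 0) *v V 0"
  have "poincare Gam R (v, w) = (z *s v, z *s w)"
    using poincare_solution[OF J] by (simp add: v_def w_def e1 e2 vector_scalar_commute vector_add_ldistrib)
  moreover have "(v, w) \<noteq> (0, 0)"
    using jacobi_sol_eq_0[OF J] nz by (auto simp: v_def w_def)
  ultimately show ?thesis unfolding poincare_eigenvalue_def by blast
qed

end

lemma has_vector_derivative_shift:
  assumes "(f has_vector_derivative f') (at (t + 1))"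
  shows "((\<lambda>s. f (s + 1)) has_vector_derivative f') (at t)"
proof -
  have "((\<lambda>s::real. s + 1) has_vector_derivative 1) (at t)"
    by (auto intro!: derivative_eq_intros simp: has_real_derivative_iff_has_vector_derivative[symmetric])
  from vector_diff_chain_at[OF this, of f f'] assms show ?thesis by (simp add: o_def)
qed

locale periodic_jacobi = jacobi_coefficients Gam R for Gam R :: "real \<Rightarrow> real^'n::finite^'n" +
  assumes periodic_Gam: "\<And>t. Gam (t + 1) = Gam t" and periodic_R: "\<And>t. R (t + 1) = R t"
    and Gam_derivative: "\<And>t. (Gam has_vector_derivative vd Gam t) (at t)"
begin

lemma jacobi_sol_shift:
  assumes J: "jacobi_sol Gam R V"
  shows "jacobi_sol Gam R (\<lambda>t. V (t + 1))" and "vd (\<lambda>t. V (t + 1)) t = vd V (t + 1)"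
proof -
  have "(Gam has_vector_derivative vd Gam (t + 1)) (at t)" for t
    using has_vector_derivative_shift[OF Gam_derivative] periodic_Gam by simp
  then have vd_Gam: "vd Gam (t + 1) = vd Gam t" for t using vector_derivative_at by metis
  obtain V1 V2 where V: "\<And>t. (V has_vector_derivative V1 t) (at t)" "\<And>t. (V1 has_vector_derivative V2 t) (at t)"
    "\<And>t. V2 t + (2::complex) *s (cmat (Gam t) *v V1 t) + cmat (vd Gam t + Gam t ** Gam t - R t) *v V t = 0"
    using J unfolding jacobi_sol_def by blast
  show "jacobi_sol Gam R (\<lambda>t. V (t + 1))"
    unfolding jacobi_sol_def
  proof (rule exI[of _ "\<lambda>t. V1 (t + 1)"], rule exI[of _ "\<lambda>t. V2 (t + 1)"], intro allI conjI)
    show "((\<lambda>t. V (t + 1)) has_vector_derivative V1 (t + 1)) (at t)"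
      and "((\<lambda>t. V1 (t + 1)) has_vector_derivative V2 (t + 1)) (at t)" for t
      by (rule has_vector_derivative_shift[OF V(1)] has_vector_derivative_shift[OF V(2)])+
    show "V2 (t + 1) + (2::complex) *s (cmat (Gam t) *v V1 (t + 1))
        + cmat (vd Gam t + Gam t ** Gam t - R t) *v V (t + 1) = 0" for t
      using V(3)[of "t + 1"] by (simp add: periodic_Gam periodic_R vd_Gam)
  qed
  show "vd (\<lambda>t. V (t + 1)) t = vd V (t + 1)"
    using has_vector_derivative_shift[OF V(1)[of "t + 1"]] V(1)[of "t + 1"] by (simp add: vector_derivative_at)
qed

lemma eigenvalue_solution:
  assumes "poincare_eigenvalue Gam R z"
  shows "\<exists>V. jacobi_sol Gam R V \<and> V \<noteq> 0 \<and> (\<forall>t. V (t + 1) = z *s V t)"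
proof -
  let ?G0 = "cmat (Gam 0)"
  obtain v w where vw: "(v, w) \<noteq> (0, 0)" "poincare Gam R (v, w) = (z *s v, z *s w)"
    using assms unfolding poincare_eigenvalue_def by blast
  obtain V where V: "jacobi_sol Gam R V" "V 0 = v" "vd V 0 = w - ?G0 *v v"
    using jacobi_sol_exists by blast
  have "(V 1, vd V 1 + ?G0 *v V 1) = (z *s v, z *s w)"
    using poincare_solution[OF V(1)] vw(2) V(2,3) by simp
  then have e1: "V 1 = z *s V 0" and e2: "vd V 1 = z *s vd V 0"
    using V(2,3) by (auto simp: vector_scalar_commute vector_ssub_ldistrib eq_diff_eq)
  have "(\<lambda>t. V (t + 1)) = fscale z V"
    using jacobi_sol_unique[OF jacobi_sol_shift(1)[OF V(1)] jacobi_sol_scale[OF V(1)]]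
      jacobi_sol_shift(2)[OF V(1), of 0] vd_scale[OF V(1)] e1 e2 by (simp add: fscale_def)
  moreover have "V \<noteq> 0" using vw(1) V by (auto simp: vd_zero)
  ultimately show ?thesis using V(1) by (intro exI[of _ V]) (auto simp: fun_eq_iff fscale_def)
qed

end

lemma shift_eigenfunctions_independent:
  fixes V :: "complex \<Rightarrow> real \<Rightarrow> complex^'n"
  assumes "finite Z" "\<forall>z\<in>Z. V z \<noteq> 0 \<and> (\<forall>t. V z (t + 1) = z *s V z t)"
    and "\<forall>t. (\<Sum>z\<in>Z. c z *s V z t) = 0"
  shows "\<forall>z\<in>Z. c z = 0"
  using assms
proof (induction Z arbitrary: c rule: finite_induct)
  case (insert a Z)
  have sum_t: "c a *s V a t + (\<Sum>z\<in>Z. c z *s V z t) = 0" for t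
    using insert.prems(2) insert.hyps by simp
  have shift: "V z (t + 1) = z *s V z t" if "z \<in> insert a Z" for z t using insert.prems(1) that by blast
  have "(\<Sum>z\<in>Z. (c z * (z - a)) *s V z t) = 0" for t
  proof -
    have "(\<Sum>z\<in>Z. (c z * (z - a)) *s V z t)
        = (c a *s (a *s V a t) + (\<Sum>z\<in>Z. c z *s (z *s V z t))) - a *s (c a *s V a t + (\<Sum>z\<in>Z. c z *s V z t))"
      by (simp add: vec_eq_iff sum_component sum_distrib_left sum_subtractf algebra_simps)
    also have "\<dots> = 0" using sum_t[of "t + 1"] sum_t[of t] shift by simp
    finally show ?thesis .
  qed
  then have "\<forall>z\<in>Z. c z * (z - a) = 0" using insert.IH[of "\<lambda>z. c z * (z - a)"] insert.prems(1) by auto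
  then have cZ: "\<forall>z\<in>Z. c z = 0" using insert.hyps(2) by auto
  then have "c a *s V a t = 0" for t using sum_t[of t] by simp
  moreover obtain t where "V a t \<noteq> 0" using insert.prems(1) by (auto simp: fun_eq_iff)
  ultimately have "c a = 0" by (metis vector_mul_eq_0)
  then show ?case using cZ by simp
qed simp


section \<open>Dimension counts\<close>

definition initial_data :: "(real \<Rightarrow> complex^'n) \<Rightarrow> complex^('n \<times> bool)" where
  "initial_data V = (\<chi> p. if snd p then V 0 $ fst p else vd V 0 $ fst p)"

lemma card_times_bool: "CARD('n::finite \<times> bool) = 2 * CARD('n)"
  by (simp add: UNIV_Times_UNIV[symmetric] card_cartesian_product del: UNIV_Times_UNIV)

lemma n_minus_le:
  fixes Gam R :: "real \<Rightarrow> real^'n^'n"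
  assumes "\<And>W. csubspace W \<Longrightarrow> W \<subseteq> J2 Gam R z \<Longrightarrow> (\<forall>V\<in>W. V \<noteq> 0 \<longrightarrow> Re (bform eps z V V) < 0)
      \<Longrightarrow> cdim W + m \<le> b"
  shows "n_minus eps Gam R z + m \<le> b"
proof -
  let ?D = "{d. \<exists>W. csubspace W \<and> W \<subseteq> J2 Gam R z \<and> cdim W = d \<and> (\<forall>V\<in>W. V \<noteq> 0 \<longrightarrow> Re (bform eps z V V) < 0)}"
  have z0: "csubspace {0::real \<Rightarrow> complex^'n}" by (simp add: csubspace_fs)
  have z1: "{0} \<subseteq> J2 Gam R z" by (simp add: J2_def jacobi_sol_zero)
  have "cdim {0::real \<Rightarrow> complex^'n} \<in> ?D" using z0 z1 by blast
  then have nonempty: "?D \<noteq> {}" by blast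
  have mb: "m \<le> b" using assms[OF z0 z1] by simp
  have "Sup ?D \<le> b - m"
    by (rule cSup_least[OF nonempty]) (use assms in force)
  then show ?thesis using mb by (simp add: n_minus_def neg_index_def)
qed

context jacobi_coefficients
begin

text \<open>Solutions are determined by their initial data, so independent sets of solutions have
  at most \<open>2n\<close> elements.\<close>
lemma solutions_independent_card_le:
  assumes "B \<subseteq> {V. jacobi_sol Gam R V}" "fs.independent B"
  shows "finite B \<and> card B \<le> 2 * CARD('n)"
proof -
  have "finite B \<and> card B \<le> CARD('n \<times> bool)"
  proof (rule independent_card_le_injective[OF jacobi_sols_subspace, where F=initial_data])
    fix x y assume "x \<in> {V. jacobi_sol Gam R V}" "y \<in> {V. jacobi_sol Gam R V}"
    then show "initial_data (x + y) = initial_data x + initial_data y"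
      by (simp add: initial_data_def vec_eq_iff vd_add)
  next
    fix c x assume "x \<in> {V. jacobi_sol Gam R V}"
    then show "initial_data (fscale c x) = c *s initial_data x"
      by (simp add: initial_data_def vec_eq_iff vd_scale fscale_apply)
  next
    fix x assume x: "x \<in> {V. jacobi_sol Gam R V}" and data: "initial_data x = 0"
    have "x 0 $ i = 0 \<and> vd x 0 $ i = 0" for i
      using arg_cong[OF data, of "\<lambda>d. d $ (i, True)"] arg_cong[OF data, of "\<lambda>d. d $ (i, False)"]
      by (simp add: initial_data_def)
    then have "x 0 = 0" "vd x 0 = 0" by (simp_all add: vec_eq_iff)
    then show "x = 0" using x by (blast intro: jacobi_sol_eq_0)
  qed (use assms in auto)
  then show ?thesis by (simp add: card_times_bool)
qed

text \<open>Dirichlet solutions are determined by \<open>V'(0)\<close>, so \<open>n0 \<le> n\<close>.\<close>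
lemma n0_le: "n0 Gam R \<le> CARD('n)"
proof -
  obtain BN where BN: "BN \<subseteq> dirichlet_sols Gam R" "fs.independent BN"
      "dirichlet_sols Gam R \<subseteq> fs.span BN" "card BN = fs.dim (dirichlet_sols Gam R)"
    using fs.basis_exists by blast
  have "finite BN \<and> card BN \<le> CARD('n)"
  proof (rule independent_card_le_injective[OF dirichlet_sols_subspace, where F="\<lambda>V. vd V 0"])
    fix x y assume "x \<in> dirichlet_sols Gam R" "y \<in> dirichlet_sols Gam R"
    then show "vd (x + y) 0 = vd x 0 + vd y 0" by (auto simp: vd_add)
  next
    fix c x assume "x \<in> dirichlet_sols Gam R"
    then show "vd (fscale c x) 0 = c *s vd x 0" by (auto simp: vd_scale)
  next
    fix x assume x: "x \<in> dirichlet_sols Gam R" "vd x 0 = 0"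
    show "x = 0" by (rule jacobi_sol_eq_0) (use x in auto)
  qed (use BN(1,2) in auto)
  then show ?thesis using BN(4) by (simp add: n0_def cdim_fs)
qed

text \<open>A \<open>b_z\<close>-negative definite subspace of \<open>J2(z)\<close> meets the Dirichlet solutions only in \<open>0\<close>,
  since \<open>b_z(V,V) = 0\<close> when \<open>V(0) = 0\<close>; so bases of the two combine.\<close>
lemma negative_subspace_plus_dirichlet:
  assumes W: "csubspace W" "W \<subseteq> J2 Gam R z" and neg: "\<forall>V\<in>W. V \<noteq> 0 \<longrightarrow> Re (bform eps z V V) < 0"
  obtains B where "B \<subseteq> J2 Gam R z" "fs.independent B" "finite B" "card B = cdim W + n0 Gam R"
proof -
  have Ws: "fs.subspace W" using W(1) by (simp add: csubspace_fs)
  obtain BN where BN: "BN \<subseteq> dirichlet_sols Gam R" "fs.independent BN"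
      "dirichlet_sols Gam R \<subseteq> fs.span BN" "card BN = fs.dim (dirichlet_sols Gam R)"
    using fs.basis_exists by blast
  obtain BW where BW: "BW \<subseteq> W" "fs.independent BW" "W \<subseteq> fs.span BW" "card BW = fs.dim W"
    using fs.basis_exists by blast
  have WN: "x = 0" if "x \<in> W" "x \<in> dirichlet_sols Gam R" for x
    using neg that by (auto simp: bform_def Gform_def)
  note U = independent_union_trivial_intersection[OF Ws dirichlet_sols_subspace WN BW(1,2) BN(1,2)]
  have sub: "BW \<union> BN \<subseteq> J2 Gam R z" using BW(1) BN(1) W(2) by (auto simp: J2_def)
  then have fin: "finite (BW \<union> BN)"
    using solutions_independent_card_le[OF _ U(1)] by (auto simp: J2_def)
  have "card (BW \<union> BN) = cdim W + n0 Gam R"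
    using card_Un_disjoint[of BW BN] fin U(2) BW(4) BN(4) by (simp add: n0_def cdim_fs)
  then show ?thesis using that sub U(1) fin by blast
qed

lemma n_minus_plus_n0_le: "n_minus eps Gam R z + n0 Gam R \<le> 2 * CARD('n)"
proof (rule n_minus_le)
  fix W assume "csubspace W" "W \<subseteq> J2 Gam R z" "\<forall>V\<in>W. V \<noteq> 0 \<longrightarrow> Re (bform eps z V V) < 0"
  then obtain B where B: "B \<subseteq> J2 Gam R z" "fs.independent B" "card B = cdim W + n0 Gam R"
    by (rule negative_subspace_plus_dirichlet)
  then show "cdim W + n0 Gam R \<le> 2 * CARD('n)"
    using solutions_independent_card_le[OF _ B(2)] by (auto simp: J2_def)
qed

text \<open>For \<open>|z| = 1\<close> not an eigenvalue of the Poincare map, \<open>V \<mapsto> conj z V'(1) - V'(0)\<close> is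
  injective on \<open>J2(z)\<close>: its kernel consists of solutions with \<open>V'(1) = z V'(0)\<close>.\<close>
lemma J2_boundary_map_injective:
  assumes z: "cmod z = 1" "\<not> poincare_eigenvalue Gam R z"
    and V: "V \<in> J2 Gam R z" and e: "cnj z *s vd V 1 - vd V 0 = 0"
  shows "V = 0"
proof (rule ccontr)
  assume "V \<noteq> 0"
  have "z * cnj z = 1" using complex_norm_square[of z] z(1) by simp
  moreover have "z *s vd V 0 = (z * cnj z) *s vd V 1"
    using e by (simp add: vector_smult_assoc[symmetric])
  ultimately have "vd V 1 = z *s vd V 0" by simp
  then show False using poincare_eigenvalueI[of V z] \<open>V \<noteq> 0\<close> V z(2) by (auto simp: J2_def)
qed

lemma n_minus_plus_n0_le_regular:
  assumes z: "cmod z = 1" "\<not> poincare_eigenvalue Gam R z"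
  shows "n_minus eps Gam R z + n0 Gam R \<le> CARD('n)"
proof (rule n_minus_le)
  fix W assume "csubspace W" "W \<subseteq> J2 Gam R z" "\<forall>V\<in>W. V \<noteq> 0 \<longrightarrow> Re (bform eps z V V) < 0"
  then obtain B where B: "B \<subseteq> J2 Gam R z" "fs.independent B" "card B = cdim W + n0 Gam R"
    by (rule negative_subspace_plus_dirichlet)
  have "finite B \<and> card B \<le> CARD('n)"
  proof (rule independent_card_le_injective[OF J2_subspace _ _ _ B(1,2), where F="\<lambda>V. cnj z *s vd V 1 - vd V 0"])
    fix x assume "x \<in> J2 Gam R z" "cnj z *s vd x 1 - vd x 0 = 0"
    then show "x = 0" by (rule J2_boundary_map_injective[OF z])
  next
    fix x y assume "x \<in> J2 Gam R z" "y \<in> J2 Gam R z"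
    then show "cnj z *s vd (x + y) 1 - vd (x + y) 0 = (cnj z *s vd x 1 - vd x 0) + (cnj z *s vd y 1 - vd y 0)"
      by (auto simp: J2_def vd_add vec_eq_iff algebra_simps)
  next
    fix c x assume "x \<in> J2 Gam R z"
    then show "cnj z *s vd (fscale c x) 1 - vd (fscale c x) 0 = c *s (cnj z *s vd x 1 - vd x 0)"
      by (auto simp: J2_def vd_scale vec_eq_iff algebra_simps)
  qed
  then show "cdim W + n0 Gam R \<le> CARD('n)" using B(3) by simp
qed

end

context periodic_jacobi
begin

lemma card_poincare_eigenvalues:
  assumes fin: "finite Z" and eig: "\<forall>z\<in>Z. poincare_eigenvalue Gam R z"
  shows "card Z \<le> 2 * CARD('n)"
proof -
  have "\<forall>z\<in>Z. \<exists>V. jacobi_sol Gam R V \<and> V \<noteq> 0 \<and> (\<forall>t. V (t + 1) = z *s V t)"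
    using eig eigenvalue_solution by blast
  from bchoice[OF this] obtain V
    where V: "\<forall>z\<in>Z. jacobi_sol Gam R (V z) \<and> V z \<noteq> 0 \<and> (\<forall>t. V z (t + 1) = z *s V z t)"
    by blast
  have injV: "inj_on V Z"
  proof (rule inj_onI)
    fix z w assume zw: "z \<in> Z" "w \<in> Z" "V z = V w"
    have Vz: "V z \<noteq> 0" "\<forall>t. V z (t + 1) = z *s V z t" and Vw: "\<forall>t. V w (t + 1) = w *s V w t"
      using V zw(1,2) by auto
    obtain t where t: "V z t \<noteq> 0" using Vz(1) by (auto simp: fun_eq_iff)
    have "z *s V z t = w *s V z t" using Vz(2) Vw zw(3) by metis
    then show "z = w" using t by simp
  qed
  have shifts: "\<forall>z\<in>Z. V z \<noteq> 0 \<and> (\<forall>t. V z (t + 1) = z *s V z t)" using V by blast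
  have "fs.independent (V ` Z)"
  proof (rule fs.independent_if_scalars_zero)
    fix c x assume s: "(\<Sum>x\<in>V ` Z. fscale (c x) x) = 0" and x: "x \<in> V ` Z"
    have "(\<Sum>z\<in>Z. fscale (c (V z)) (V z)) = 0" using s by (simp add: sum.reindex[OF injV])
    then have "(\<Sum>z\<in>Z. fscale (c (V z)) (V z)) t = 0" for t by simp
    then have "\<forall>t. (\<Sum>z\<in>Z. c (V z) *s V z t) = 0" by (simp only: sum_fun_apply fscale_apply) simp
    then have "\<forall>z\<in>Z. c (V z) = 0" by (rule shift_eigenfunctions_independent[OF fin shifts])
    then show "c x = 0" using x by auto
  qed (use fin in simp)
  moreover have "V ` Z \<subseteq> {V. jacobi_sol Gam R V}" using V by auto
  ultimately have "card (V ` Z) \<le> 2 * CARD('n)"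
    using solutions_independent_card_le by blast
  then show ?thesis using card_image[OF injV] by simp
qed

text \<open>Summing the two bounds over finitely many points of the unit circle: the eigenvalues
  among them contribute at most \<open>2n\<close> extra terms of size at most \<open>n\<close>.\<close>
lemma sum_n_minus_le:
  assumes fin: "finite Z" and circle: "\<forall>z\<in>Z. cmod z = 1"
  shows "(\<Sum>z\<in>Z. int (n_minus eps Gam R z))
    \<le> int (card Z) * (int CARD('n) - int (n0 Gam R)) + 2 * int CARD('n) ^ 2"
proof -
  let ?n = "int CARD('n)" and ?a = "int (n0 Gam R)"
  define E where "E = {z \<in> Z. poincare_eigenvalue Gam R z}"
  have finE: "finite E" and eigE: "\<forall>z\<in>E. poincare_eigenvalue Gam R z" using fin by (auto simp: E_def)
  have cardE: "card E \<le> 2 * CARD('n)" by (rule card_poincare_eigenvalues[OF finE eigE])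
  have summand_le: "int (n_minus eps Gam R z) \<le> (?n - ?a) + (if z \<in> E then ?n else 0)" if z: "z \<in> Z" for z
  proof (cases "z \<in> E")
    case True
    then show ?thesis using n_minus_plus_n0_le[of eps z] by simp
  next
    case False
    then have "\<not> poincare_eigenvalue Gam R z" using z by (simp add: E_def)
    then show ?thesis using n_minus_plus_n0_le_regular[of z eps] circle z False by simp
  qed
  have EZ: "Z \<inter> {z. z \<in> E} = E" "Z \<inter> E = E" by (auto simp: E_def)
  have "(\<Sum>z\<in>Z. int (n_minus eps Gam R z)) \<le> (\<Sum>z\<in>Z. (?n - ?a) + (if z \<in> E then ?n else 0))"
    by (rule sum_mono[OF summand_le])
  also have "\<dots> = int (card Z) * (?n - ?a) + int (card E) * ?n"
    using fin by (simp add: sum.distrib sum.If_cases EZ)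
  also have "\<dots> \<le> int (card Z) * (?n - ?a) + 2 * ?n ^ 2"
  proof -
    have "card E * CARD('n) \<le> 2 * CARD('n) ^ 2"
      using mult_right_mono[OF cardE, of "CARD('n)"] by (simp add: power2_eq_square)
    then have "int (card E * CARD('n)) \<le> int (2 * CARD('n) ^ 2)" by (simp only: of_nat_le_iff)
    then show ?thesis by simp
  qed
  finally show ?thesis .
qed

end


lemma roots_of_unity_powers:
  assumes "N \<ge> 1"
  shows "inj_on (\<lambda>k. exp (2 * pi * \<i> / of_nat N) ^ k) {..<N}"
    and "cmod (exp (2 * pi * \<i> / of_nat N) ^ k) = 1"
proof -
  have "exp (2 * pi * \<i> / of_nat N) ^ k = exp (2 * of_real pi * \<i> * of_nat k / of_nat N)" for k
    by (simp add: exp_of_nat_mult[symmetric] mult.commute mult.left_commute)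
  then show "inj_on (\<lambda>k. exp (2 * pi * \<i> / of_nat N) ^ k) {..<N}"
    using bij_betw_imp_inj_on[OF Complex_Transcendental.bij_betw_roots_unity[of N]] by simp
  show "cmod (exp (2 * pi * \<i> / of_nat N) ^ k) = 1" by (simp add: norm_power)
qed

text \<open>The sum over the \<open>N\<close>-th roots of unity; the last step uses \<open>n0 \<le> n\<close>.\<close>
lemma (in periodic_jacobi) sum_n_minus_roots_of_unity:
  assumes N: "N \<ge> 1"
  shows "(\<Sum>k<N. int (n_minus eps Gam R (exp (2 * pi * \<i> / of_nat N) ^ k)))
    \<le> int N * (int CARD('n) - int (n0 Gam R)) + 4 * int CARD('n) ^ 2 - 2 * int (n0 Gam R) * int CARD('n)"
proof -
  let ?n = "int CARD('n)" and ?a = "int (n0 Gam R)"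
  let ?Z = "(\<lambda>k. exp (2 * pi * \<i> / of_nat N) ^ k) ` {..<N}"
  note inj = roots_of_unity_powers(1)[OF N]
  have "(\<Sum>k<N. int (n_minus eps Gam R (exp (2 * pi * \<i> / of_nat N) ^ k)))
      = (\<Sum>z\<in>?Z. int (n_minus eps Gam R z))" by (subst sum.reindex[OF inj]) (simp add: o_def)
  also have "\<dots> \<le> int N * (?n - ?a) + 2 * ?n ^ 2"
    using sum_n_minus_le[of ?Z eps] roots_of_unity_powers(2)[OF N] card_image[OF inj] by auto
  also have "\<dots> \<le> int N * (?n - ?a) + 4 * ?n ^ 2 - 2 * ?a * ?n"
  proof -
    have "?a * ?n \<le> ?n * ?n" using n0_le by (intro mult_right_mono) auto
    then show ?thesis by (simp add: power2_eq_square algebra_simps)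
  qed
  finally show ?thesis .
qed

theorem lemma6p3:
  fixes eps :: "'n::finite \<Rightarrow> real" and Gam R :: "real \<Rightarrow> real^'n^'n"
  assumes eps: "\<forall>i. eps i = 1 \<or> eps i = -1"
    and smooth: "smooth_fun Gam" "smooth_fun R"
    and periodic: "\<forall>t. Gam (t + 1) = Gam t" "\<forall>t. R (t + 1) = R t"
    and metric: "\<forall>t i j. eps i * Gam t $ i $ j = - (eps j * Gam t $ j $ i)"
    and curv_sym: "\<forall>t i j. eps i * R t $ i $ j = eps j * R t $ j $ i"
  shows "(\<forall>z. cmod z = 1 \<longrightarrow>
            int (n_minus eps Gam R z) \<le> 2 * int CARD('n) - int (n0 Gam R))
       \<and> (\<forall>z. cmod z = 1 \<and> \<not> poincare_eigenvalue Gam R z \<longrightarrow>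
            int (n_minus eps Gam R z) \<le> int CARD('n) - int (n0 Gam R))
       \<and> (\<forall>N::nat. N \<ge> 1 \<longrightarrow>
            (let \<omega> = exp (2 * pi * \<i> / of_nat N) in
              0 \<le> (\<Sum>k<N. int (n_minus eps Gam R (\<omega> ^ k))) \<and>
              (\<Sum>k<N. int (n_minus eps Gam R (\<omega> ^ k)))
                \<le> int N * (int CARD('n) - int (n0 Gam R)) + 4 * int CARD('n) ^ 2
                   - 2 * int (n0 Gam R) * int CARD('n)))"
proof -
  interpret periodic_jacobi Gam R
    using smooth_fun_facts[OF smooth(1)] smooth_fun_facts[OF smooth(2)] periodic
    by unfold_locales auto
  have "int (n_minus eps Gam R z) \<le> 2 * int CARD('n) - int (n0 Gam R)" for z
    using n_minus_plus_n0_le[of eps z] by linarith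
  moreover have "int (n_minus eps Gam R z) \<le> int CARD('n) - int (n0 Gam R)"
    if "cmod z = 1" "\<not> poincare_eigenvalue Gam R z" for z
    using n_minus_plus_n0_le_regular[OF that, of eps] by linarith
  ultimately show ?thesis
    using sum_n_minus_roots_of_unity[of _ eps] by (simp add: Let_def sum_nonneg)
qed

end
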